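(* Let $S\subset\mathbb{C}^4$ be the surface germ at $0$ parametrized by $\rho(a,t)=(a,t^3,t^4,at^5)$. Then the singular locus of $S$ is the line $\mathbb{C}\times\{(0,0,0)\}$, $S$ is Whitney regular along it, $S$ is defined (in coordinates $x,y,z,w$) by $y^4-z^3,\ yw-xz^2,\ zw-xy^3,\ x^3y^5-w^3,\ x^2y^2z-w^2$, and $S$ is not Cohen–Macaulay at the origin (the hyperplane section $S\cap\{x=0\}$ has an embedded component at $0$).
   Context: Whitney regularity along the singular locus $\mathcal{C}$: for all sequences $x_n\in S\setminus\mathcal{C}$, $y_n\in\mathcal{C}\setminus\{0\}$ converging to $0$ with secants $\overline{x_ny_n}\to l$ and tangent planes $T_{x_n}S\to T$, one has $T_0\mathcal{C}\subset T$ and $l\subset T$. *)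

theory Defs
  imports "HOL-Analysis.Analysis"
begin

text \<open>Points of C^4 have coordinates x = v$1, y = v$2, z = v$3, w = v$4.\<close>

definition rho :: "complex \<Rightarrow> complex \<Rightarrow> complex^4" where
  "rho a t = vector [a, t^3, t^4, a * t^5]"

definition surfS :: "(complex^4) set" where
  "surfS = {rho a t | a t. True}"

definition singline :: "(complex^4) set" where
  "singline = {vector [a, 0, 0, 0] | a. True}"


definition clinear_map :: "(complex^'m \<Rightarrow> complex^'n) \<Rightarrow> bool" where
  "clinear_map D \<longleftrightarrow> linear D \<and> (\<forall>c v. D (c *s v) = c *s D v)"

definition csubspace :: "(complex^'n) set \<Rightarrow> bool" where
  "csubspace T \<longleftrightarrow> 0 \<in> T \<and> (\<forall>u\<in>T. \<forall>v\<in>T. u + v \<in> T) \<and> (\<forall>c. \<forall>v\<in>T. c *s v \<in> T)"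

definition cline :: "complex^'n \<Rightarrow> (complex^'n) set" where
  "cline v = {c *s v | c. True}"

definition complex_chart :: "(complex^4) set \<Rightarrow> (complex^4) set \<Rightarrow> (complex^2) set \<Rightarrow>
    (complex^2 \<Rightarrow> complex^4) \<Rightarrow> bool" where
  "complex_chart S U V \<phi> \<longleftrightarrow> open U \<and> open V \<and> (\<exists>\<psi>. homeomorphism V (S \<inter> U) \<phi> \<psi>) \<and>
     (\<forall>q\<in>V. \<exists>D. (\<phi> has_derivative D) (at q) \<and> clinear_map D \<and> inj D)"

definition regular_pt :: "(complex^4) set \<Rightarrow> complex^4 \<Rightarrow> bool" where
  "regular_pt S p \<longleftrightarrow> p \<in> S \<and> (\<exists>U V \<phi>. p \<in> U \<and> complex_chart S U V \<phi>)"

definition sing_locus :: "(complex^4) set \<Rightarrow> (complex^4) set" where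
  "sing_locus S = {p \<in> S. \<not> regular_pt S p}"

definition tangent_plane :: "(complex^4) set \<Rightarrow> complex^4 \<Rightarrow> (complex^4) set \<Rightarrow> bool" where
  "tangent_plane S p T \<longleftrightarrow> (\<exists>U V \<phi> q D. p \<in> U \<and> complex_chart S U V \<phi> \<and> q \<in> V \<and>
      \<phi> q = p \<and> (\<phi> has_derivative D) (at q) \<and> T = range D)"

text \<open>Convergence of subspaces T_n to a subspace T of the same dimension (in the
  Grassmannian): every vector of T is a limit of vectors of T_n.\<close>

definition subspaces_converge :: "(nat \<Rightarrow> (complex^4) set) \<Rightarrow> (complex^4) set \<Rightarrow> bool" where
  "subspaces_converge Tn T \<longleftrightarrow>
     (\<forall>v\<in>T. \<exists>vn. (\<forall>n. vn n \<in> Tn n) \<and> vn \<longlonglongrightarrow> v)"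

definition whitney_regular_at0 :: "(complex^4) set \<Rightarrow> (complex^4) set \<Rightarrow> (complex^4) set \<Rightarrow> bool" where
  "whitney_regular_at0 S C TC \<longleftrightarrow>
    (\<forall>x y Tn T l.
       (\<forall>n. x n \<in> S - C \<and> y n \<in> C - {0} \<and> tangent_plane S (x n) (Tn n)) \<and>
       x \<longlonglongrightarrow> 0 \<and> y \<longlonglongrightarrow> 0 \<and>
       csubspace l \<and> dim l = 2 \<and> subspaces_converge (\<lambda>n. cline (x n - y n)) l \<and>
       csubspace T \<and> dim T = 4 \<and> subspaces_converge Tn T
       \<longrightarrow> TC \<subseteq> T \<and> l \<subseteq> T)"

inductive cpoly4 :: "(complex^4 \<Rightarrow> complex) \<Rightarrow> bool" where
  const: "cpoly4 (\<lambda>v. c)"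
| coord: "cpoly4 (\<lambda>v. v $ i)"
| add: "cpoly4 f \<Longrightarrow> cpoly4 g \<Longrightarrow> cpoly4 (\<lambda>v. f v + g v)"
| mult: "cpoly4 f \<Longrightarrow> cpoly4 g \<Longrightarrow> cpoly4 (\<lambda>v. f v * g v)"

definition ideal_gen :: "(complex^4 \<Rightarrow> complex) list \<Rightarrow> (complex^4 \<Rightarrow> complex) set" where
  "ideal_gen gs = {f. \<exists>c. (\<forall>i<length gs. cpoly4 (c i)) \<and>
                        f = (\<lambda>v. \<Sum>i<length gs. c i v * (gs ! i) v)}"

text \<open>Membership in the localization of the ideal at the origin.\<close>

definition loc_mem0 :: "(complex^4 \<Rightarrow> complex) list \<Rightarrow> (complex^4 \<Rightarrow> complex) \<Rightarrow> bool" where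
  "loc_mem0 gs f \<longleftrightarrow> (\<exists>u. cpoly4 u \<and> u 0 \<noteq> 0 \<and> (\<lambda>v. u v * f v) \<in> ideal_gen gs)"

definition Sgens :: "(complex^4 \<Rightarrow> complex) list" where
  "Sgens = [\<lambda>v. (v$2)^4 - (v$3)^3,
            \<lambda>v. v$2 * v$4 - v$1 * (v$3)^2,
            \<lambda>v. v$3 * v$4 - v$1 * (v$2)^3,
            \<lambda>v. (v$1)^3 * (v$2)^5 - (v$4)^3,
            \<lambda>v. (v$1)^2 * (v$2)^2 * v$3 - (v$4)^2]"

definition Jgens :: "(complex^4 \<Rightarrow> complex) list" where
  "Jgens = Sgens @ [\<lambda>v. v$1]"

end

theory Submission
  imports Defs "HOL-Complex_Analysis.Cauchy_Integral_Formula"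
begin

(* The parametrisation rho is injective and an immersion exactly where t \<noteq> 0, so
   (a, t) \<mapsto> rho a t is a chart of S off the line y = 0.  At a point of the line there is
   no chart: a holomorphic curve in S through the line lifts holomorphically through rho, since
   its parameter z/y satisfies |z/y|^3 = |y| and so extends over the removable singularity;
   hence every derivative of a chart there has vanishing y-, z- and w-components and cannot
   be injective.

   Near the origin, tangent vectors u at rho a t satisfy u_z = 4/3 t u_y and
   u_w = t^5 u_x - a t^2 u_y + 2 a t u_z, and secants from the line to rho a t satisfy
   u_z = t u_y, u_w = a t^2 u_y.  As a, t \<rightarrow> 0, all limits lie in the plane z = w = 0,
   which is therefore the limiting tangent plane; it contains the line and the limiting secants.

   Modulo the five generators every polynomial reduces to a combination of the standard
   monomials x^i y^j z^k (k < 3) and x^i w.  Their pullbacks a^i t^(3j+4k) and a^(i+1) t^5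
   are pairwise distinct, so such a combination vanishes on S only if it is zero.

   Every element of the ideal J of S \<inter> {x = 0} vanishes to second order along the w-axis,
   while u w with u(0) \<noteq> 0 does not; yet x_i w \<in> J for every coordinate x_i, so w is
   supported at the origin: an embedded point. *)

lemma vector_4_nth [simp]:
  "(vector [a, b, c, d] :: 'a::zero^4) $ 1 = a"
  "(vector [a, b, c, d] :: 'a::zero^4) $ 2 = b"
  "(vector [a, b, c, d] :: 'a::zero^4) $ 3 = c"
  "(vector [a, b, c, d] :: 'a::zero^4) $ 4 = d"
  unfolding vector_def by simp_all

lemma vector_2_nth [simp]:
  "(vector [a, b] :: 'a::zero^2) $ 1 = a"
  "(vector [a, b] :: 'a::zero^2) $ 2 = b"
  unfolding vector_def by simp_all

lemma vec4_eqI: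
  "(v::'a^4) $ 1 = u $ 1 \<Longrightarrow> v $ 2 = u $ 2 \<Longrightarrow> v $ 3 = u $ 3 \<Longrightarrow> v $ 4 = u $ 4 \<Longrightarrow> v = u"
  by (simp add: vec_eq_iff forall_4)

lemma vec2_eqI: "(v::'a^2) $ 1 = u $ 1 \<Longrightarrow> v $ 2 = u $ 2 \<Longrightarrow> v = u"
  by (simp add: vec_eq_iff forall_2)

lemma axis_4_nth [simp]:
  "(axis 4 s :: 'a::zero^4) $ 1 = 0" "(axis 4 s :: 'a::zero^4) $ 2 = 0"
  "(axis 4 s :: 'a::zero^4) $ 3 = 0" "(axis 4 s :: 'a::zero^4) $ 4 = s"
  by (simp_all add: axis_def)

lemma norm_axis: "norm (axis i x :: 'a::real_normed_vector^'n) = norm x"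
proof -
  have "(\<Sum>j\<in>UNIV. (norm (axis i x $ j))\<^sup>2) = (\<Sum>j\<in>UNIV. if j = i then (norm x)\<^sup>2 else 0)"
    by (rule sum.cong) (auto simp: axis_def)
  then show ?thesis by (simp add: norm_vec_def L2_set_def)
qed

lemma bounded_linear_axis: "bounded_linear (axis i :: 'a::real_normed_vector \<Rightarrow> 'a^'n)"
  by (rule bounded_linear_intro[where K=1])
    (simp_all add: axis_def vec_eq_iff norm_axis[unfolded axis_def])

lemma has_derivative_vec_lambda:
  fixes f :: "'a::real_normed_vector \<Rightarrow> 'b::real_normed_vector^'n"
  assumes "\<And>i. ((\<lambda>x. f x $ i) has_derivative (\<lambda>h. f' h $ i)) F"
  shows "(f has_derivative f') F"
proof -
  have "((\<lambda>x. \<Sum>i\<in>UNIV. axis i (f x $ i)) has_derivative (\<lambda>h. \<Sum>i\<in>UNIV. axis i (f' h $ i))) F"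
    by (intro has_derivative_sum bounded_linear.has_derivative[OF bounded_linear_axis] assms)
  moreover have "(\<Sum>i\<in>UNIV. axis i (x $ i)) = x" for x :: "'b^'n"
    by (simp add: vec_eq_iff axis_def sum_component if_distrib sum.delta cong: if_cong)
  ultimately show ?thesis by simp
qed

lemma has_derivative_vec_nth:
  "(f has_derivative f') F \<Longrightarrow> ((\<lambda>x. f x $ i) has_derivative (\<lambda>h. f' h $ i)) F"
  by (rule bounded_linear.has_derivative[OF bounded_linear_vec_nth])

lemma has_derivative_vec_nth_ident [derivative_intros]:
  "((\<lambda>x. x $ i) has_derivative (\<lambda>h. h $ i)) F"
  by (rule bounded_linear_imp_has_derivative[OF bounded_linear_vec_nth])

lemma scaleR_eq_smult_complex: "c *\<^sub>R (x::complex^'n) = complex_of_real c *s x"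
  unfolding vec_eq_iff vector_scaleR_component vector_smult_component
  by (simp add: scaleR_conv_of_real)

lemma subspace_if_csubspace: "csubspace T \<Longrightarrow> subspace (T :: (complex^'n) set)"
  unfolding csubspace_def subspace_def by (simp add: scaleR_eq_smult_complex)

lemma open_vec_nth_neq_0: "open {v :: 'a::{t1_space,zero}^'n. v $ i \<noteq> 0}"
proof -
  have "{v :: 'a^'n. v $ i \<noteq> 0} = (\<lambda>v. v $ i) -` (- {0})" by auto
  then show ?thesis by (simp add: open_vimage_vec_nth open_Compl)
qed

lemma has_derivative_line: "((\<lambda>l::complex. q + l *s d) has_derivative (\<lambda>m. m *s d)) F"
proof (rule has_derivative_vec_lambda)
  fix i
  show "((\<lambda>l. (q + l *s d) $ i) has_derivative (\<lambda>m. (m *s d) $ i)) F"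
    by simp (auto intro!: derivative_eq_intros)
qed

lemma has_field_derivative_along_line:
  fixes \<phi> :: "complex^'m \<Rightarrow> complex^'n"
  assumes "(\<phi> has_derivative D) (at (q + l0 *s d))" and "clinear_map D"
  shows "((\<lambda>l. \<phi> (q + l *s d) $ k) has_field_derivative D d $ k) (at l0)"
proof -
  have "((\<lambda>l. \<phi> (q + l *s d) $ k) has_derivative (\<lambda>m. D (m *s d) $ k)) (at l0)"
    using has_derivative_vec_nth[OF diff_chain_at[OF has_derivative_line assms(1)]]
    by (simp add: o_def)
  moreover have "(\<lambda>m. D (m *s d) $ k) = (*) (D d $ k)"
    using assms(2) by (auto simp: clinear_map_def mult.commute)
  ultimately show ?thesis by (simp add: has_field_derivative_def)
qed

lemma tendsto_0_of_power:
  fixes f :: "'a \<Rightarrow> 'b::real_normed_div_algebra"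
  assumes "((\<lambda>x. f x ^ n) \<longlongrightarrow> 0) F" and "n > 0"
  shows "(f \<longlongrightarrow> 0) F"
proof -
  have "((\<lambda>x. root n (norm (f x ^ n))) \<longlongrightarrow> root n (norm (0::'b))) F"
    by (intro tendsto_real_root tendsto_norm assms(1))
  then have "((\<lambda>x. norm (f x)) \<longlongrightarrow> 0) F"
    using assms(2) by (simp add: norm_power real_root_power_cancel)
  then show ?thesis by (rule tendsto_norm_zero_cancel)
qed

lemma eventually_neq_of_has_field_derivative:
  fixes f :: "'a::real_normed_field \<Rightarrow> 'a"
  assumes "(f has_field_derivative c) (at a)" and "c \<noteq> 0"
  shows "\<forall>\<^sub>F x in at a. f x \<noteq> f a"
proof -
  have "((\<lambda>x. (f x - f a) / (x - a)) \<longlongrightarrow> c) (at a)"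
    using assms(1) by (simp add: has_field_derivative_iff)
  then have "\<forall>\<^sub>F x in at a. (f x - f a) / (x - a) \<noteq> 0"
    using assms(2) by (rule tendsto_imp_eventually_ne)
  then show ?thesis by eventually_elim auto
qed

lemma not_inj_clinear_map_into_axis:
  fixes D :: "complex^2 \<Rightarrow> complex^'n"
  assumes "clinear_map D" and "\<And>d k. k \<noteq> i \<Longrightarrow> D d $ k = 0"
  shows "\<not> inj D"
proof
  assume inj: "inj D"
  have lin: "linear D" and sc: "\<And>c v. D (c *s v) = c *s D v"
    using assms(1) by (auto simp: clinear_map_def)
  have D0: "d = 0" if "D d = 0" for d
    using inj linear_0[OF lin] that by (metis injD)
  define u :: "complex^2" where "u = D (axis 2 1) $ i *s axis 1 1 - D (axis 1 1) $ i *s axis 2 1"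
  have "D u $ k = 0" for k
    using assms(2)[of k] by (cases "k = i") (simp_all add: u_def linear_diff[OF lin] sc)
  then have "D u = 0" by (simp add: vec_eq_iff)
  then have "u = 0" by (rule D0)
  then have "u $ 2 = 0" by simp
  then have "D (axis 1 1) $ i = 0" by (simp add: u_def axis_def)
  then have "D (axis 1 1) $ k = 0" for k using assms(2)[of k] by (cases "k = i") simp_all
  then have "D (axis 1 1) = 0" by (simp add: vec_eq_iff)
  then have "axis 1 (1::complex) = (0::complex^2)" by (rule D0)
  then show False by (simp add: axis_eq_0_iff)
qed

lemma tangent_plane_annihilated:
  fixes g :: "complex^4 \<Rightarrow> 'a::real_normed_vector"
  assumes tp: "tangent_plane S p T" and g: "\<And>v. v \<in> S \<Longrightarrow> g v = 0"
    and G: "(g has_derivative G) (at p)" and u: "u \<in> T"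
  shows "G u = 0"
proof -
  obtain U V \<phi> q D where ch: "complex_chart S U V \<phi>" and q: "q \<in> V" "\<phi> q = p"
    and D: "(\<phi> has_derivative D) (at q)" and T: "T = range D"
    using tp unfolding tangent_plane_def by blast
  have V: "open V" and \<phi>S: "\<And>x. x \<in> V \<Longrightarrow> \<phi> x \<in> S"
    using ch unfolding complex_chart_def homeomorphism_def by blast+
  have "((\<lambda>x. g (\<phi> x)) has_derivative (\<lambda>h. G (D h))) (at q)"
    using diff_chain_at[OF D, of g G] G q(2) by (simp add: o_def)
  moreover have "((\<lambda>x. g (\<phi> x)) has_derivative (\<lambda>h. 0)) (at q)"
    by (rule has_derivative_transform_within_open[OF has_derivative_const V q(1)]) (simp add: g \<phi>S)
  ultimately have "(\<lambda>h. G (D h)) = (\<lambda>h. 0)" by (rule has_derivative_unique)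
  moreover obtain h where "u = D h" using u T by blast
  ultimately show ?thesis by (simp add: fun_eq_iff)
qed

section \<open>Polynomial functions and the ideals they generate\<close>

lemma cpoly4_minus: "cpoly4 f \<Longrightarrow> cpoly4 (\<lambda>v. - f v)"
  using cpoly4.mult[OF cpoly4.const[of "-1"]] by simp

lemma cpoly4_diff: "cpoly4 f \<Longrightarrow> cpoly4 g \<Longrightarrow> cpoly4 (\<lambda>v. f v - g v)"
  using cpoly4.add[OF _ cpoly4_minus] by simp

lemma cpoly4_power: "cpoly4 f \<Longrightarrow> cpoly4 (\<lambda>v. f v ^ n)"
  by (induction n) (simp_all add: cpoly4.const cpoly4.mult)

lemma cpoly4_sum: "(\<And>i. i \<in> A \<Longrightarrow> cpoly4 (f i)) \<Longrightarrow> cpoly4 (\<lambda>v. \<Sum>i\<in>A. f i v)"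
  by (induction A rule: infinite_finite_induct) (simp_all add: cpoly4.const cpoly4.add)

lemma ideal_gen_zeroI: "(\<And>v. f v = 0) \<Longrightarrow> f \<in> ideal_gen gs"
  unfolding ideal_gen_def by (auto intro!: exI[of _ "\<lambda>i v. 0"] cpoly4.const)

lemma ideal_gen_add:
  assumes "f \<in> ideal_gen gs" and "g \<in> ideal_gen gs"
  shows "(\<lambda>v. f v + g v) \<in> ideal_gen gs"
proof -
  obtain c d where "\<forall>i<length gs. cpoly4 (c i)" "f = (\<lambda>v. \<Sum>i<length gs. c i v * (gs ! i) v)"
    and "\<forall>i<length gs. cpoly4 (d i)" "g = (\<lambda>v. \<Sum>i<length gs. d i v * (gs ! i) v)"
    using assms unfolding ideal_gen_def by blast
  then show ?thesis unfolding ideal_gen_def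
    by (auto intro!: exI[of _ "\<lambda>i v. c i v + d i v"] cpoly4.add
        simp: distrib_right sum.distrib)
qed

lemma ideal_gen_mult:
  assumes "cpoly4 p" and "f \<in> ideal_gen gs"
  shows "(\<lambda>v. p v * f v) \<in> ideal_gen gs"
proof -
  obtain c where "\<forall>i<length gs. cpoly4 (c i)" "f = (\<lambda>v. \<Sum>i<length gs. c i v * (gs ! i) v)"
    using assms(2) unfolding ideal_gen_def by blast
  with assms(1) show ?thesis unfolding ideal_gen_def
    by (auto intro!: exI[of _ "\<lambda>i v. p v * c i v"] cpoly4.mult
        simp: sum_distrib_left mult.assoc)
qed

lemma ideal_gen_cong: "f \<in> ideal_gen gs \<Longrightarrow> (\<And>v. f v = g v) \<Longrightarrow> g \<in> ideal_gen gs"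
  by (metis ext)

lemma ideal_gen_multiple:
  assumes "cpoly4 p" and "g \<in> set gs" and "\<And>v. f v = p v * g v"
  shows "f \<in> ideal_gen gs"
proof -
  obtain k where k: "k < length gs" "g = gs ! k" using assms(2) by (auto simp: in_set_conv_nth)
  have "(\<Sum>i<length gs. (if i = k then p v else 0) * (gs ! i) v) = f v" for v
    using k assms(3) by (simp add: if_distrib[of "\<lambda>x. x * _"] cong: if_cong)
  moreover have "cpoly4 (\<lambda>v. if i = k then p v else 0)" for i
    by (cases "i = k") (simp_all add: assms(1) cpoly4.const)
  ultimately show ?thesis unfolding ideal_gen_def
    by (auto intro!: exI[of _ "\<lambda>i v. if i = k then p v else 0"])
qed

lemma ideal_gen_lincomb2:
  assumes "cpoly4 p" "cpoly4 q" "g \<in> set gs" "h \<in> set gs" and "\<And>v. f v = p v * g v + q v * h v"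
  shows "f \<in> ideal_gen gs"
proof -
  have "(\<lambda>v. p v * g v + q v * h v) \<in> ideal_gen gs"
    by (rule ideal_gen_add[OF ideal_gen_multiple[OF assms(1,3)] ideal_gen_multiple[OF assms(2,4)]])
      simp_all
  then show ?thesis by (rule ideal_gen_cong) (simp add: assms(5))
qed

lemma cpoly4_ideal_gen:
  assumes "\<forall>g\<in>set gs. cpoly4 g" and "f \<in> ideal_gen gs"
  shows "cpoly4 f"
  using assms unfolding ideal_gen_def by (auto intro!: cpoly4_sum cpoly4.mult)

lemma ideal_gen_vanish:
  assumes "f \<in> ideal_gen gs" and "\<forall>g\<in>set gs. g v = 0"
  shows "f v = 0"
  using assms unfolding ideal_gen_def by (auto intro!: sum.neutral)

lemma field_differentiable_cpoly4_comp:
  assumes "cpoly4 f" and "\<And>i. (\<lambda>s. \<gamma> s $ i) field_differentiable (at s0)"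
  shows "(\<lambda>s. f (\<gamma> s)) field_differentiable (at s0)"
  using assms by (induction f rule: cpoly4.induct)
    (auto intro: field_differentiable_add field_differentiable_mult)

lemma ideal_gen_has_field_derivative_0:
  assumes f: "f \<in> ideal_gen gs"
    and \<gamma>: "\<And>i. (\<lambda>s. \<gamma> s $ i) field_differentiable (at 0)"
    and gs: "\<And>g. g \<in> set gs \<Longrightarrow> g (\<gamma> 0) = 0 \<and> ((\<lambda>s. g (\<gamma> s)) has_field_derivative 0) (at 0)"
  shows "((\<lambda>s. f (\<gamma> s)) has_field_derivative 0) (at 0)"
proof -
  obtain c where c: "\<forall>i<length gs. cpoly4 (c i)" "f = (\<lambda>v. \<Sum>i<length gs. c i v * (gs ! i) v)"
    using f unfolding ideal_gen_def by blast
  have "((\<lambda>s. c i (\<gamma> s) * (gs ! i) (\<gamma> s)) has_field_derivative 0) (at 0)"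
    if i: "i < length gs" for i
  proof -
    obtain C where "((\<lambda>s. c i (\<gamma> s)) has_field_derivative C) (at 0)"
      using field_differentiable_cpoly4_comp[OF _ \<gamma>] c(1) i
      unfolding field_differentiable_def by blast
    from DERIV_mult[OF this conjunct2[OF gs[OF nth_mem[OF i]]]]
    show ?thesis using gs[OF nth_mem[OF i]] by simp
  qed
  then have "((\<lambda>s. \<Sum>i<length gs. c i (\<gamma> s) * (gs ! i) (\<gamma> s)) has_field_derivative
      (\<Sum>i<length gs. 0)) (at 0)"
    by (intro DERIV_sum) auto
  then show ?thesis using c(2) by simp
qed

lemma polyfun_coeff_sum_eq_0:
  fixes c :: "'i \<Rightarrow> complex" and e :: "'i \<Rightarrow> nat"
  assumes A: "finite A" and zero: "\<And>x. (\<Sum>l\<in>A. c l * x ^ e l) = 0"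
  shows "(\<Sum>l\<in>{l\<in>A. e l = p}. c l) = 0"
proof -
  define n where "n = (\<Sum>l\<in>A. e l)"
  have en: "e l \<le> n" if "l \<in> A" for l
    unfolding n_def by (rule member_le_sum[OF that _ A]) simp
  define C where "C i = (\<Sum>l\<in>{l\<in>A. e l = i}. c l)" for i
  have "(\<Sum>l\<in>A. c l * x ^ e l) = (\<Sum>i\<le>n. C i * x ^ i)" for x
  proof -
    have "(\<Sum>l\<in>A. c l * x ^ e l) = (\<Sum>i\<le>n. \<Sum>l\<in>{l\<in>A. e l = i}. c l * x ^ e l)"
      by (rule sum.group[symmetric]) (use A en in auto)
    also have "\<dots> = (\<Sum>i\<le>n. C i * x ^ i)"
      unfolding C_def sum_distrib_right by (intro sum.cong refl) auto
    finally show ?thesis .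
  qed
  then have C0: "\<forall>i\<le>n. C i = 0"
    using zero polyfun_eq_0[of C n] by simp
  show ?thesis
  proof (cases "p \<le> n")
    case True
    with C0 show ?thesis by (simp add: C_def)
  next
    case False
    then have "{l\<in>A. e l = p} = {}" using en by fastforce
    then show ?thesis by (simp only: sum.empty)
  qed
qed

lemma polyfun2_coeff_sum_eq_0:
  fixes c :: "'i \<Rightarrow> complex" and e :: "'i \<Rightarrow> nat \<times> nat"
  assumes A: "finite A" and zero: "\<And>a t. (\<Sum>l\<in>A. c l * (a ^ fst (e l) * t ^ snd (e l))) = 0"
  shows "(\<Sum>l\<in>{l\<in>A. e l = p}. c l) = 0"
proof -
  have "(\<Sum>l\<in>{l\<in>A. fst (e l) = fst p}. c l * t ^ snd (e l)) = 0" for t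
    by (rule polyfun_coeff_sum_eq_0[OF A]) (use zero in \<open>simp add: algebra_simps\<close>)
  then have "(\<Sum>l\<in>{l\<in>{l\<in>A. fst (e l) = fst p}. snd (e l) = snd p}. c l) = 0"
    using polyfun_coeff_sum_eq_0[of "{l\<in>A. fst (e l) = fst p}" c "\<lambda>l. snd (e l)"] A by simp
  moreover have "{l\<in>{l\<in>A. fst (e l) = fst p}. snd (e l) = snd p} = {l\<in>A. e l = p}"
    by (auto simp: prod_eq_iff)
  ultimately show ?thesis by simp
qed

section \<open>The surface as a zero set\<close>

lemma rho_nth [simp]:
  "rho a t $ 1 = a" "rho a t $ 2 = t ^ 3" "rho a t $ 3 = t ^ 4" "rho a t $ 4 = a * t ^ 5"
  by (simp_all add: rho_def)

lemma rho_eq_0_iff: "rho a t = 0 \<longleftrightarrow> a = 0 \<and> t = 0"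
  by (auto simp: vec_eq_iff forall_4)

lemma mem_surfS: "v \<in> surfS \<longleftrightarrow> (\<exists>a t. v = rho a t)"
  by (simp add: surfS_def)

lemma mem_singline: "v \<in> singline \<longleftrightarrow> v $ 2 = 0 \<and> v $ 3 = 0 \<and> v $ 4 = 0"
proof
  assume "v $ 2 = 0 \<and> v $ 3 = 0 \<and> v $ 4 = 0"
  then have "v = vector [v $ 1, 0, 0, 0]" by (intro vec4_eqI) simp_all
  then show "v \<in> singline" unfolding singline_def by blast
qed (auto simp: singline_def)

lemma Sgens_vanish_rho: "g \<in> set Sgens \<Longrightarrow> g (rho a t) = 0"
  unfolding Sgens_def
  by (auto simp: power_mult_distrib simp flip: power_add power_mult)

lemma eq_rho_if_Sgens_vanish:
  fixes v :: "complex^4"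
  assumes "\<forall>g\<in>set Sgens. g v = 0" and "v $ 2 \<noteq> 0"
  shows "v = rho (v $ 1) (v $ 3 / v $ 2)"
proof -
  let ?t = "v $ 3 / v $ 2"
  have yz: "(v $ 2) ^ 4 = (v $ 3) ^ 3" and yw: "v $ 2 * v $ 4 = v $ 1 * (v $ 3) ^ 2"
    using assms(1) by (auto simp: Sgens_def)
  have t3: "?t ^ 3 = v $ 2" and t4: "?t ^ 4 = v $ 3"
    using yz assms(2) by (simp_all add: power_divide field_simps eval_nat_numeral)
  have "v $ 1 * ?t ^ 5 = v $ 1 * (v $ 3) ^ 2 * (v $ 2) ^ 4 / (v $ 2) ^ 5"
    using yz by (simp add: power_divide eval_nat_numeral)
  also have "\<dots> = v $ 4"
    using yw assms(2) by (simp add: field_simps eval_nat_numeral)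
  finally show ?thesis using t3 t4 by (intro vec4_eqI) simp_all
qed

lemma surfS_eq_zero_set: "surfS = {v. \<forall>g\<in>set Sgens. g v = 0}"
proof (intro equalityI subsetI)
  fix v :: "complex^4"
  assume v: "v \<in> {v. \<forall>g\<in>set Sgens. g v = 0}"
  show "v \<in> surfS"
  proof (cases "v $ 2 = 0")
    case True
    with v have "v $ 3 = 0" "v $ 4 = 0" by (auto simp: Sgens_def)
    with True have "v = rho (v $ 1) 0" by (intro vec4_eqI) simp_all
    then show ?thesis by (auto simp: mem_surfS)
  next
    case False
    with v show ?thesis by (auto simp: mem_surfS intro: eq_rho_if_Sgens_vanish)
  qed
qed (auto simp: mem_surfS Sgens_vanish_rho)

lemma Sgens_vanish_surfS: "v \<in> surfS \<Longrightarrow> g \<in> set Sgens \<Longrightarrow> g v = 0"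
  using surfS_eq_zero_set by blast

lemma surfS_rho_param: "v \<in> surfS \<Longrightarrow> v $ 2 \<noteq> 0 \<Longrightarrow> v = rho (v $ 1) (v $ 3 / v $ 2)"
  by (rule eq_rho_if_Sgens_vanish) (auto intro: Sgens_vanish_surfS)

lemma singline_subset_surfS: "singline \<subseteq> surfS"
  unfolding surfS_eq_zero_set by (auto simp: mem_singline Sgens_def)

lemma surfS_notin_singline_iff: "v \<in> surfS \<Longrightarrow> v \<notin> singline \<longleftrightarrow> v $ 2 \<noteq> 0"
  by (auto simp: mem_surfS mem_singline)

lemma in_singline_if_surfS_y_eq_0: "v \<in> surfS \<Longrightarrow> v $ 2 = 0 \<Longrightarrow> v \<in> singline"
  using surfS_notin_singline_iff by blast

lemma rho_tendsto_0: "((\<lambda>t. rho 0 t) \<longlongrightarrow> 0) (at 0)"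
proof (rule vec_tendstoI)
  fix i :: 4
  have "((\<lambda>t. t ^ n) \<longlongrightarrow> 0) (at (0::complex))" if "n > 0" for n
    using that by (auto intro!: tendsto_eq_intros)
  then show "((\<lambda>t. rho 0 t $ i) \<longlongrightarrow> 0 $ i) (at 0)"
    using exhaust_4[of i] by auto
qed

lemma zero_islimpt_surfS_hyperplane: "(0::complex^4) islimpt (surfS \<inter> {v. v $ 1 = 0})"
  unfolding islimpt_iff_eventually
proof
  have "filterlim (\<lambda>t. rho 0 t) (at 0) (at 0)"
    using rho_tendsto_0 by (rule filterlim_atI) (auto simp: rho_eq_0_iff eventually_at_filter)
  moreover assume "\<forall>\<^sub>F v in at 0. v \<notin> surfS \<inter> {v. v $ 1 = 0}"
  ultimately have "\<forall>\<^sub>F t in at 0. rho 0 t \<notin> surfS \<inter> {v. v $ 1 = 0}"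
    by (rule filterlim_iff[THEN iffD1, rule_format])
  then have "\<forall>\<^sub>F t::complex in at 0. False"
    by (rule eventually_mono) (auto simp: mem_surfS)
  then show False by simp
qed

section \<open>The singular locus\<close>

definition rho_chart :: "complex^2 \<Rightarrow> complex^4" where
  "rho_chart q = rho (q $ 1) (q $ 2)"

definition rho_chart_inv :: "complex^4 \<Rightarrow> complex^2" where
  "rho_chart_inv v = vector [v $ 1, v $ 3 / v $ 2]"

definition rho_chart_deriv :: "complex^2 \<Rightarrow> complex^2 \<Rightarrow> complex^4" where
  "rho_chart_deriv q h = vector [h $ 1, 3 * (q $ 2)^2 * h $ 2, 4 * (q $ 2)^3 * h $ 2,
     h $ 1 * (q $ 2)^5 + 5 * q $ 1 * (q $ 2)^4 * h $ 2]"

lemma has_derivative_rho_chart: "(rho_chart has_derivative rho_chart_deriv q) (at q)"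
proof (rule has_derivative_vec_lambda)
  fix i :: 4
  have "((\<lambda>x. x $ 1) has_derivative (\<lambda>h. h $ 1)) (at q)"
    "((\<lambda>x. (x $ 2) ^ 3) has_derivative (\<lambda>h. 3 * (q $ 2)\<^sup>2 * h $ 2)) (at q)"
    "((\<lambda>x. (x $ 2) ^ 4) has_derivative (\<lambda>h. 4 * (q $ 2) ^ 3 * h $ 2)) (at q)"
    "((\<lambda>x. x $ 1 * (x $ 2) ^ 5) has_derivative
       (\<lambda>h. h $ 1 * (q $ 2) ^ 5 + 5 * q $ 1 * (q $ 2) ^ 4 * h $ 2)) (at q)"
    by (auto intro!: derivative_eq_intros simp: algebra_simps)
  then show "((\<lambda>x. rho_chart x $ i) has_derivative (\<lambda>h. rho_chart_deriv q h $ i)) (at q)"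
    using exhaust_4[of i] by (auto simp: rho_chart_def rho_chart_deriv_def)
qed

lemma clinear_map_rho_chart_deriv: "clinear_map (rho_chart_deriv q)"
proof -
  have add: "rho_chart_deriv q (x + y) = rho_chart_deriv q x + rho_chart_deriv q y" for x y
    by (rule vec4_eqI) (simp_all add: rho_chart_deriv_def algebra_simps)
  have smult: "rho_chart_deriv q (c *s x) = c *s rho_chart_deriv q x" for c x
    by (rule vec4_eqI) (simp_all add: rho_chart_deriv_def algebra_simps)
  then have "linear (rho_chart_deriv q)"
    by (intro linearI add) (simp add: scaleR_eq_smult_complex)
  with smult show ?thesis by (simp add: clinear_map_def)
qed

lemma inj_rho_chart_deriv:
  assumes "q $ 2 \<noteq> 0" shows "inj (rho_chart_deriv q)"
proof (rule injI)
  fix h h' assume eq: "rho_chart_deriv q h = rho_chart_deriv q h'"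
  have "h $ 1 = h' $ 1" using arg_cong[OF eq, of "\<lambda>v. v $ 1"] by (simp add: rho_chart_deriv_def)
  moreover have "h $ 2 = h' $ 2"
    using arg_cong[OF eq, of "\<lambda>v. v $ 2"] assms by (simp add: rho_chart_deriv_def)
  ultimately show "h = h'" by (rule vec2_eqI)
qed

lemma complex_chart_rho_chart:
  "complex_chart surfS {v. v $ 2 \<noteq> 0} {q. q $ 2 \<noteq> 0} rho_chart"
  unfolding complex_chart_def
proof (intro conjI)
  show "open {v :: complex^4. v $ 2 \<noteq> 0}" "open {q :: complex^2. q $ 2 \<noteq> 0}"
    by (rule open_vec_nth_neq_0)+
  show "\<forall>q\<in>{q. q $ 2 \<noteq> 0}. \<exists>D. (rho_chart has_derivative D) (at q) \<and> clinear_map D \<and> inj D"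
    using has_derivative_rho_chart clinear_map_rho_chart_deriv inj_rho_chart_deriv by blast
  show "\<exists>\<psi>. homeomorphism {q. q $ 2 \<noteq> 0} (surfS \<inter> {v. v $ 2 \<noteq> 0}) rho_chart \<psi>"
  proof (intro exI[of _ rho_chart_inv] homeomorphismI)
    show "continuous_on {q. q $ 2 \<noteq> 0} rho_chart"
      using has_derivative_rho_chart
      by (meson continuous_at_imp_continuous_on has_derivative_continuous)
    have inv: "rho_chart_inv = (\<lambda>v. \<chi> i. if i = 1 then v $ 1 else v $ 3 / v $ 2)"
      by (rule ext, rule vec2_eqI) (simp_all add: rho_chart_inv_def)
    show "continuous_on (surfS \<inter> {v. v $ 2 \<noteq> 0}) rho_chart_inv"
      unfolding inv
      apply (intro continuous_on_vec_lambda)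
      subgoal for i using exhaust_2[of i] by (auto intro!: continuous_intros)
      done
    show "rho_chart ` {q. q $ 2 \<noteq> 0} \<subseteq> surfS \<inter> {v. v $ 2 \<noteq> 0}"
      by (auto simp: rho_chart_def mem_surfS intro!: exI)
    show "rho_chart_inv ` (surfS \<inter> {v. v $ 2 \<noteq> 0}) \<subseteq> {q. q $ 2 \<noteq> 0}"
      by (auto simp: rho_chart_inv_def mem_surfS)
    show "rho_chart_inv (rho_chart q) = q" if "q \<in> {q. q $ 2 \<noteq> 0}" for q
      using that
      by (intro vec2_eqI) (simp_all add: rho_chart_inv_def rho_chart_def eval_nat_numeral)
    show "rho_chart (rho_chart_inv v) = v" if "v \<in> surfS \<inter> {v. v $ 2 \<noteq> 0}" for v
      using surfS_rho_param that by (simp add: rho_chart_def rho_chart_inv_def)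
  qed
qed

lemma regular_pt_surfS:
  assumes "v \<in> surfS" and "v $ 2 \<noteq> 0"
  shows "regular_pt surfS v"
  unfolding regular_pt_def
proof (intro conjI exI)
  show "v \<in> surfS" "v \<in> {v. v $ 2 \<noteq> 0}" using assms by simp_all
  show "complex_chart surfS {v. v $ 2 \<noteq> 0} {q. q $ 2 \<noteq> 0} rho_chart"
    by (rule complex_chart_rho_chart)
qed

lemma surfS_curve_lift:
  fixes \<gamma> :: "complex \<Rightarrow> complex^4"
  assumes r: "0 < r" and hol: "\<And>k. (\<lambda>l. \<gamma> l $ k) holomorphic_on ball 0 r"
    and S: "\<And>l. l \<in> ball 0 r \<Longrightarrow> \<gamma> l \<in> surfS" and y0: "\<gamma> 0 $ 2 = 0"
    and nz: "\<And>l. l \<in> ball 0 r \<Longrightarrow> l \<noteq> 0 \<Longrightarrow> \<gamma> l $ 2 \<noteq> 0"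
  obtains h where "h holomorphic_on ball 0 r" "h 0 = 0"
    "\<And>l. l \<in> ball 0 r \<Longrightarrow> \<gamma> l = rho (\<gamma> l $ 1) (h l)"
proof -
  define h where "h l = (if l = 0 then 0 else \<gamma> l $ 3 / \<gamma> l $ 2)" for l
  have lift: "\<gamma> l = rho (\<gamma> l $ 1) (h l)" if "l \<in> ball 0 r" for l
  proof (cases "l = 0")
    case True
    with S[OF that] y0 have "\<gamma> l \<in> singline" by (simp add: in_singline_if_surfS_y_eq_0)
    with True y0 show ?thesis by (intro vec4_eqI) (simp_all add: h_def mem_singline)
  next
    case False
    then show ?thesis using surfS_rho_param[OF S[OF that] nz[OF that False]] by (simp add: h_def)
  qed
  have "(\<lambda>l. \<gamma> l $ 3 / \<gamma> l $ 2) holomorphic_on ball 0 r - {0}"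
    using hol nz by (intro holomorphic_intros) (auto intro: holomorphic_on_subset)
  then have hol0: "h holomorphic_on ball 0 r - {0}"
    by (rule holomorphic_transform) (simp add: h_def)
  have "continuous_on (ball 0 r) (\<lambda>l. \<gamma> l $ 2)"
    by (rule holomorphic_on_imp_continuous_on[OF hol])
  then have "((\<lambda>l. \<gamma> l $ 2) \<longlongrightarrow> 0) (at 0 within ball 0 r)"
    using r y0 unfolding continuous_on_def by (metis centre_in_ball)
  moreover have "\<forall>\<^sub>F l in at 0 within ball 0 r. \<gamma> l $ 2 = h l ^ 3"
    unfolding eventually_at_filter
  proof (intro always_eventually allI impI)
    fix l :: complex assume "l \<in> ball 0 r"
    then show "\<gamma> l $ 2 = h l ^ 3" using arg_cong[OF lift, of l "\<lambda>v. v $ 2"] by simp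
  qed
  ultimately have "((\<lambda>l. h l ^ 3) \<longlongrightarrow> 0) (at 0 within ball 0 r)"
    by (rule Lim_transform_eventually)
  then have lim0: "(h \<longlongrightarrow> 0) (at 0 within ball 0 r)"
    by (rule tendsto_0_of_power) simp
  have "h holomorphic_on ball 0 r"
    by (rule no_isolated_singularity'[OF _ hol0]) (use lim0 in \<open>simp_all add: h_def\<close>)
  then show ?thesis using lift that by (simp add: h_def)
qed

lemma rho_comp_has_field_derivative_0:
  assumes "(x has_field_derivative X) (at 0)" "(h has_field_derivative H) (at 0)" "h 0 = 0"
    and "k \<noteq> 1"
  shows "((\<lambda>l. rho (x l) (h l) $ k) has_field_derivative 0) (at 0)"
proof -
  have "((\<lambda>l. h l ^ 3) has_field_derivative 0) (at 0)"
    "((\<lambda>l. h l ^ 4) has_field_derivative 0) (at 0)"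
    "((\<lambda>l. x l * h l ^ 5) has_field_derivative 0) (at 0)"
    using assms(1-3) by (auto intro!: derivative_eq_intros)
  then show ?thesis using exhaust_4[of k] assms(4) by auto
qed

lemma surfS_curve_deriv_at_singline:
  fixes \<gamma> :: "complex \<Rightarrow> complex^4"
  assumes r: "0 < r" and hol: "\<And>k. (\<lambda>l. \<gamma> l $ k) holomorphic_on ball 0 r"
    and S: "\<And>l. l \<in> ball 0 r \<Longrightarrow> \<gamma> l \<in> surfS" and y0: "\<gamma> 0 $ 2 = 0"
    and k: "k \<noteq> 1" and c: "((\<lambda>l. \<gamma> l $ k) has_field_derivative c) (at 0)"
  shows "c = 0"
proof (rule ccontr)
  \<comment> \<open>If \<open>c \<noteq> 0\<close>, the \<open>k\<close>-th coordinate and hence \<open>y\<close> has no zeros on a punctured disc,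
    where the curve lifts through \<open>rho\<close>; then \<open>c = 0\<close> after all.\<close>
  assume "c \<noteq> 0"
  have on_line: "\<gamma> l $ k = 0" if "l \<in> ball 0 r" "\<gamma> l $ 2 = 0" for l
    using in_singline_if_surfS_y_eq_0[OF S[OF that(1)] that(2)] k exhaust_4[of k]
    by (auto simp: mem_singline)
  have "\<forall>\<^sub>F l in at 0. \<gamma> l $ k \<noteq> 0"
    using eventually_neq_of_has_field_derivative[OF c \<open>c \<noteq> 0\<close>] on_line[of 0] r y0 by simp
  then obtain d where d: "0 < d" "\<And>l. l \<noteq> 0 \<Longrightarrow> dist l 0 < d \<Longrightarrow> \<gamma> l $ k \<noteq> 0"
    unfolding eventually_at by blast
  define s where "s = min d r"
  have s: "0 < s" "ball 0 s \<subseteq> ball 0 r" using d r by (auto simp: s_def)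
  have nz: "\<gamma> l $ 2 \<noteq> 0" if "l \<in> ball 0 s" "l \<noteq> 0" for l
    using that d(2)[of l] on_line[of l] s(2) by (auto simp: s_def dist_norm)
  obtain h where h: "h holomorphic_on ball 0 s" "h 0 = 0"
    and lift: "\<And>l. l \<in> ball 0 s \<Longrightarrow> \<gamma> l = rho (\<gamma> l $ 1) (h l)"
    using surfS_curve_lift[OF s(1) holomorphic_on_subset[OF hol s(2)] S y0 nz] s(2) by blast
  have "(\<lambda>l. \<gamma> l $ 1) field_differentiable at 0" "h field_differentiable at 0"
    by (rule holomorphic_on_imp_differentiable_at[OF hol open_ball], simp add: r)
      (rule holomorphic_on_imp_differentiable_at[OF h(1) open_ball], simp add: s(1))
  then obtain X H where "((\<lambda>l. \<gamma> l $ 1) has_field_derivative X) (at 0)"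
    and "(h has_field_derivative H) (at 0)"
    unfolding field_differentiable_def by blast
  then have "((\<lambda>l. rho (\<gamma> l $ 1) (h l) $ k) has_field_derivative 0) (at 0)"
    using h(2) k by (rule rho_comp_has_field_derivative_0)
  then have "((\<lambda>l. \<gamma> l $ k) has_field_derivative 0) (at 0)"
    by (rule has_field_derivative_transform_within_open[OF _ open_ball[of 0 s]])
      (use s(1) in \<open>simp_all add: lift[symmetric]\<close>)
  with c \<open>c \<noteq> 0\<close> show False using DERIV_unique by blast
qed

lemma surfS_chart_deriv_at_singline:
  assumes ch: "complex_chart surfS U V \<phi>" and q: "q \<in> V" "\<phi> q $ 2 = 0"
    and D: "(\<phi> has_derivative D) (at q)" "clinear_map D" and k: "k \<noteq> 1"
  shows "D d $ k = 0"
proof -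
  have V: "open V" and \<phi>S: "\<And>p. p \<in> V \<Longrightarrow> \<phi> p \<in> surfS"
    and \<phi>D: "\<And>p. p \<in> V \<Longrightarrow> \<exists>D. (\<phi> has_derivative D) (at p) \<and> clinear_map D"
    using ch unfolding complex_chart_def homeomorphism_def by blast+
  have "open ((\<lambda>l::complex. q + l *s d) -` V)"
    using V has_derivative_continuous[OF has_derivative_line] by (rule continuous_open_vimage)
  moreover have "0 \<in> (\<lambda>l::complex. q + l *s d) -` V" using q by simp
  ultimately obtain r where r: "0 < r" "ball 0 r \<subseteq> (\<lambda>l::complex. q + l *s d) -` V"
    by (meson open_contains_ball)
  have hol: "(\<lambda>l. \<phi> (q + l *s d) $ j) holomorphic_on ball 0 r" for j
    unfolding holomorphic_on_open[OF open_ball]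
    using \<phi>D r(2) has_field_derivative_along_line by blast
  have S: "\<phi> (q + l *s d) \<in> surfS" if "l \<in> ball 0 r" for l
    using \<phi>S r(2) that by blast
  have "((\<lambda>l. \<phi> (q + l *s d) $ k) has_field_derivative D d $ k) (at 0)"
    using has_field_derivative_along_line[of \<phi> D q 0 d k] D by simp
  then show ?thesis
    using surfS_curve_deriv_at_singline[where \<gamma>="\<lambda>l. \<phi> (q + l *s d)", OF r(1) hol S _ k] q(2)
    by simp
qed

lemma singline_not_regular_pt: "p \<in> singline \<Longrightarrow> \<not> regular_pt surfS p"
proof
  assume p: "p \<in> singline" and "regular_pt surfS p"
  then obtain U V \<phi> \<psi> where "p \<in> U" and ch: "complex_chart surfS U V \<phi>"
    and hom: "homeomorphism V (surfS \<inter> U) \<phi> \<psi>"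
    unfolding regular_pt_def complex_chart_def by blast
  with p singline_subset_surfS have "p \<in> \<phi> ` V"
    using homeomorphism_image1[OF hom] by blast
  then obtain q where q: "q \<in> V" "\<phi> q = p" by blast
  obtain D where D: "(\<phi> has_derivative D) (at q)" "clinear_map D" "inj D"
    using ch q(1) unfolding complex_chart_def by blast
  have "D d $ k = 0" if "k \<noteq> 1" for d k
    using surfS_chart_deriv_at_singline[OF ch q(1) _ D(1,2) that] q(2) p
    by (simp add: mem_singline)
  then show False using not_inj_clinear_map_into_axis[OF D(2)] D(3) by blast
qed

lemma sing_locus_surfS: "sing_locus surfS = singline"
proof (intro equalityI subsetI)
  fix p assume "p \<in> sing_locus surfS"
  then show "p \<in> singline"
    using regular_pt_surfS surfS_notin_singline_iff by (auto simp: sing_locus_def)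
next
  fix p assume "p \<in> singline"
  then show "p \<in> sing_locus surfS"
    using singline_not_regular_pt singline_subset_surfS by (auto simp: sing_locus_def)
qed

section \<open>Whitney regularity\<close>

lemma tangent_plane_surfS_at_rho:
  assumes tp: "tangent_plane surfS (rho a t) T" and t: "t \<noteq> 0" and u: "u \<in> T"
  shows "u $ 3 = 4/3 * t * u $ 2"
    and "u $ 4 = t^5 * u $ 1 - a * t^2 * u $ 2 + 2 * a * t * u $ 3"
proof -
  let ?p = "rho a t"
  have g1: "(v $ 2)^4 - (v $ 3)^3 = 0" if "v \<in> surfS" for v
    using that by (auto simp: mem_surfS simp flip: power_mult)
  have d1: "((\<lambda>v. (v $ 2)^4 - (v $ 3)^3) has_derivative
      (\<lambda>h. 4 * (?p $ 2)^3 * h $ 2 - 3 * (?p $ 3)^2 * h $ 3)) (at ?p)"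
    by (auto intro!: derivative_eq_intros)
  from tangent_plane_annihilated[OF tp g1 d1 u]
  have "4 * (t^3)^3 * u $ 2 - 3 * (t^4)^2 * u $ 3 = 0" by simp
  moreover have "t^8 * (4 * t * u $ 2 - 3 * u $ 3) = 4 * (t^3)^3 * u $ 2 - 3 * (t^4)^2 * u $ 3"
    by (simp add: algebra_simps eval_nat_numeral)
  ultimately show "u $ 3 = 4/3 * t * u $ 2" using t by simp
  have g2: "v $ 2 * v $ 4 - v $ 1 * (v $ 3)^2 = 0" if "v \<in> surfS" for v
    using that by (auto simp: mem_surfS algebra_simps eval_nat_numeral)
  have d2: "((\<lambda>v. v $ 2 * v $ 4 - v $ 1 * (v $ 3)^2) has_derivative
      (\<lambda>h. h $ 2 * ?p $ 4 + ?p $ 2 * h $ 4 - h $ 1 * (?p $ 3)^2 - ?p $ 1 * (2 * ?p $ 3 * h $ 3)))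
      (at ?p)"
    by (auto intro!: derivative_eq_intros simp: algebra_simps)
  from tangent_plane_annihilated[OF tp g2 d2 u]
  have "u $ 2 * (a * t^5) + t^3 * u $ 4 - u $ 1 * (t^4)^2 - a * (2 * t^4 * u $ 3) = 0" by simp
  moreover have "t^3 * (u $ 4 - (t^5 * u $ 1 - a * t^2 * u $ 2 + 2 * a * t * u $ 3))
      = u $ 2 * (a * t^5) + t^3 * u $ 4 - u $ 1 * (t^4)^2 - a * (2 * t^4 * u $ 3)"
    by (simp add: algebra_simps eval_nat_numeral)
  ultimately show "u $ 4 = t^5 * u $ 1 - a * t^2 * u $ 2 + 2 * a * t * u $ 3" using t by simp
qed

lemma secant_from_singline_to_rho:
  assumes "y \<in> singline" and "u \<in> cline (rho a t - y)"
  shows "u $ 3 = t * u $ 2" and "u $ 4 = a * t^2 * u $ 2"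
  using assms by (auto simp: cline_def mem_singline eval_nat_numeral)

definition xy_plane :: "(complex^4) set" where
  "xy_plane = {v. v $ 3 = 0 \<and> v $ 4 = 0}"

lemma subspace_xy_plane: "subspace xy_plane"
  unfolding subspace_def xy_plane_def by simp

(* Dimension over the reals, as in whitney_regular_at0. *)
lemma dim_xy_plane: "dim xy_plane \<le> 4"
proof -
  define B :: "(complex^4) set" where "B = {axis 1 1, axis 1 \<i>, axis 2 1, axis 2 \<i>}"
  have "v \<in> span B" if "v \<in> xy_plane" for v
  proof -
    have "v = Re (v $ 1) *\<^sub>R axis 1 1 + Im (v $ 1) *\<^sub>R axis 1 \<i>
        + Re (v $ 2) *\<^sub>R axis 2 1 + Im (v $ 2) *\<^sub>R axis 2 \<i>"
      using that by (intro vec4_eqI) (simp_all add: xy_plane_def axis_def complex_eq_iff)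
    also have "\<dots> \<in> span B" unfolding B_def
      by (intro span_add span_scale span_base) auto
    finally show ?thesis .
  qed
  then have "dim xy_plane \<le> dim B"
    by (metis dim_span dim_subset subsetI)
  also have "\<dots> \<le> card B" by (rule dim_le_card') (simp add: B_def)
  also have "\<dots> \<le> 4" unfolding B_def by (simp add: card_insert_if)
  finally show ?thesis .
qed

lemma tangent_limit_subset_xy_plane:
  assumes x: "\<And>n. tangent_plane surfS (rho (a n) (t n)) (Tn n)" "\<And>n. t n \<noteq> 0"
    and a: "a \<longlonglongrightarrow> 0" and t: "t \<longlonglongrightarrow> 0" and conv: "subspaces_converge Tn T"
  shows "T \<subseteq> xy_plane"
proof
  fix v assume "v \<in> T"
  then obtain u where u: "\<And>n. u n \<in> Tn n" "u \<longlonglongrightarrow> v"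
    using conv unfolding subspaces_converge_def by blast
  have c: "(\<lambda>n. u n $ i) \<longlonglongrightarrow> v $ i" for i using u(2) by (rule tendsto_vec_nth)
  note eq = tangent_plane_surfS_at_rho[OF x(1) x(2) u(1)]
  have "(\<lambda>n. u n $ 3) \<longlonglongrightarrow> 4/3 * 0 * v $ 2"
    unfolding eq(1) by (intro tendsto_intros t c)
  then have "v $ 3 = 0" using c LIMSEQ_unique by fastforce
  have "(\<lambda>n. u n $ 4) \<longlonglongrightarrow> 0^5 * v $ 1 - 0 * 0^2 * v $ 2 + 2 * 0 * 0 * v $ 3"
    unfolding eq(2) by (intro tendsto_intros a t c)
  then have "v $ 4 = 0" using c LIMSEQ_unique by fastforce
  with \<open>v $ 3 = 0\<close> show "v \<in> xy_plane" by (simp add: xy_plane_def)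
qed

lemma secant_limit_subset_xy_plane:
  assumes y: "\<And>n. y n \<in> singline" and a: "a \<longlonglongrightarrow> 0" and t: "t \<longlonglongrightarrow> 0"
    and conv: "subspaces_converge (\<lambda>n. cline (rho (a n) (t n) - y n)) l"
  shows "l \<subseteq> xy_plane"
proof
  fix v assume "v \<in> l"
  then obtain u where u: "\<And>n. u n \<in> cline (rho (a n) (t n) - y n)" "u \<longlonglongrightarrow> v"
    using conv unfolding subspaces_converge_def by blast
  have c: "(\<lambda>n. u n $ i) \<longlonglongrightarrow> v $ i" for i using u(2) by (rule tendsto_vec_nth)
  note eq = secant_from_singline_to_rho[OF y u(1)]
  have "(\<lambda>n. u n $ 3) \<longlonglongrightarrow> 0 * v $ 2"
    unfolding eq(1) by (intro tendsto_intros t c)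
  then have "v $ 3 = 0" using c LIMSEQ_unique by fastforce
  have "(\<lambda>n. u n $ 4) \<longlonglongrightarrow> 0 * 0^2 * v $ 2"
    unfolding eq(2) by (intro tendsto_intros a t c)
  then have "v $ 4 = 0" using c LIMSEQ_unique by fastforce
  with \<open>v $ 3 = 0\<close> show "v \<in> xy_plane" by (simp add: xy_plane_def)
qed

lemma whitney_regular_surfS: "whitney_regular_at0 surfS singline singline"
  unfolding whitney_regular_at0_def
proof (intro allI impI, elim conjE)
  fix x y :: "nat \<Rightarrow> complex^4" and Tn :: "nat \<Rightarrow> (complex^4) set" and T l
  assume H: "\<forall>n. x n \<in> surfS - singline \<and> y n \<in> singline - {0} \<and> tangent_plane surfS (x n) (Tn n)"
    and "x \<longlonglongrightarrow> 0" and conv_l: "subspaces_converge (\<lambda>n. cline (x n - y n)) l"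
    and T: "csubspace T" "dim T = 4" and conv_T: "subspaces_converge Tn T"
  define a where "a n = x n $ 1" for n
  define t where "t n = x n $ 3 / x n $ 2" for n
  have x2: "x n $ 2 \<noteq> 0" for n using H surfS_notin_singline_iff by blast
  have x_eq: "x n = rho (a n) (t n)" for n
    using surfS_rho_param H x2 by (simp add: a_def t_def)
  have x2t: "x n $ 2 = t n ^ 3" for n using arg_cong[OF x_eq, of "\<lambda>v. v $ 2"] by simp
  have "t n \<noteq> 0" for n using x2[of n] by (simp add: x2t)
  have "(\<lambda>n. x n $ i) \<longlonglongrightarrow> 0" for i using tendsto_vec_nth[OF \<open>x \<longlonglongrightarrow> 0\<close>] by simp
  from this[of 1] this[of 2] have "a \<longlonglongrightarrow> 0" "(\<lambda>n. t n ^ 3) \<longlonglongrightarrow> 0"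
    by (simp_all add: a_def[abs_def] x2t)
  then have "t \<longlonglongrightarrow> 0" by (intro tendsto_0_of_power[of t 3]) simp_all
  have tp: "tangent_plane surfS (rho (a n) (t n)) (Tn n)" for n
    using H x_eq by metis
  have "T \<subseteq> xy_plane"
    using tp \<open>\<And>n. t n \<noteq> 0\<close> \<open>a \<longlonglongrightarrow> 0\<close> \<open>t \<longlonglongrightarrow> 0\<close> conv_T
    by (rule tangent_limit_subset_xy_plane)
  then have "T = xy_plane"
    using subspace_dim_equal[OF subspace_if_csubspace[OF T(1)] subspace_xy_plane] T(2) dim_xy_plane
    by simp
  moreover have "l \<subseteq> xy_plane"
    using H \<open>a \<longlonglongrightarrow> 0\<close> \<open>t \<longlonglongrightarrow> 0\<close> conv_l[unfolded x_eq]
    by (intro secant_limit_subset_xy_plane) blast+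
  moreover have "singline \<subseteq> xy_plane" by (auto simp: mem_singline xy_plane_def)
  ultimately show "singline \<subseteq> T \<and> l \<subseteq> T" by simp
qed

section \<open>The ideal of the surface\<close>

datatype monomial = XYZ nat nat nat | XW nat

fun eval_monomial :: "monomial \<Rightarrow> complex^4 \<Rightarrow> complex" where
  "eval_monomial (XYZ i j k) v = (v $ 1) ^ i * (v $ 2) ^ j * (v $ 3) ^ k"
| "eval_monomial (XW i) v = (v $ 1) ^ i * v $ 4"

fun standard_monomial :: "monomial \<Rightarrow> bool" where
  "standard_monomial (XYZ i j k) \<longleftrightarrow> k < 3"
| "standard_monomial (XW i) \<longleftrightarrow> True"

fun rho_exponents :: "monomial \<Rightarrow> nat \<times> nat" where
  "rho_exponents (XYZ i j k) = (i, 3 * j + 4 * k)"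
| "rho_exponents (XW i) = (Suc i, 5)"

lemma eval_monomial_rho:
  "eval_monomial m (rho a t) = a ^ fst (rho_exponents m) * t ^ snd (rho_exponents m)"
proof (cases m)
  case (XYZ i j k)
  have "t ^ (3 * j + 4 * k) = (t ^ 3) ^ j * (t ^ 4) ^ k" by (simp add: power_add power_mult)
  then show ?thesis
    by (simp only: XYZ eval_monomial.simps rho_nth rho_exponents.simps fst_conv snd_conv mult.assoc)
next
  case (XW i)
  then show ?thesis
    by (simp only: eval_monomial.simps rho_nth rho_exponents.simps fst_conv snd_conv power_Suc
        mult.assoc mult.left_commute)
qed

lemma nat_3_4_combination_ne_5: "3 * j + 4 * (k::nat) \<noteq> 5"
  by presburger

lemma nat_3_4_combination_inj:
  assumes "3 * j + 4 * k = 3 * j' + 4 * (k'::nat)" and "k < 3" and "k' < 3"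
  shows "j = j' \<and> k = k'"
proof -
  have mod3: "(3 * j + 4 * k) mod 3 = (k::nat) mod 3" for j k by presburger
  have "k mod 3 = k' mod 3" using arg_cong[OF assms(1), of "\<lambda>n. n mod 3"] by (simp only: mod3)
  with assms(2,3) have "k = k'" by simp
  with assms(1) show ?thesis by simp
qed

lemma inj_on_rho_exponents: "inj_on rho_exponents {m. standard_monomial m}"
proof (rule inj_onI)
  fix m m'
  assume "m \<in> {m. standard_monomial m}" "m' \<in> {m. standard_monomial m}"
    and "rho_exponents m = rho_exponents m'"
  then show "m = m'"
    using nat_3_4_combination_ne_5 not_sym[OF nat_3_4_combination_ne_5]
    by (cases m; cases m') (auto dest: nat_3_4_combination_inj)
qed

(* Reduced forms of x, y, z and w times a monomial, from the relations
   y w = x z^2, z^3 = y^4, z w = x y^3 and w^2 = x^2 y^2 z that hold modulo the ideal. *)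

fun mul_x :: "monomial \<Rightarrow> monomial" where
  "mul_x (XYZ i j k) = XYZ (Suc i) j k"
| "mul_x (XW i) = XW (Suc i)"

fun mul_y :: "monomial \<Rightarrow> monomial" where
  "mul_y (XYZ i j k) = XYZ i (Suc j) k"
| "mul_y (XW i) = XYZ (Suc i) 0 2"

fun mul_z :: "monomial \<Rightarrow> monomial" where
  "mul_z (XYZ i j k) = (if k < 2 then XYZ i j (Suc k) else XYZ i (j + 4) (k - 2))"
| "mul_z (XW i) = XYZ (Suc i) 3 0"

fun mul_w :: "monomial \<Rightarrow> monomial" where
  "mul_w (XYZ i j (Suc k)) = XYZ (Suc i) (j + 3) k"
| "mul_w (XYZ i (Suc j) 0) = XYZ (Suc i) j 2"
| "mul_w (XYZ i 0 0) = XW i"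
| "mul_w (XW i) = XYZ (i + 2) 2 1"

lemma mul_x_congruent:
  "(\<lambda>v. v $ 1 * eval_monomial m v - eval_monomial (mul_x m) v) \<in> ideal_gen Sgens"
  by (cases m) (auto intro: ideal_gen_zeroI)

lemma mul_y_congruent:
  "(\<lambda>v. v $ 2 * eval_monomial m v - eval_monomial (mul_y m) v) \<in> ideal_gen Sgens"
proof (cases m)
  case (XW i)
  then show ?thesis
    by (intro ideal_gen_multiple[of "\<lambda>v. (v $ 1) ^ i" "\<lambda>v. v $ 2 * v $ 4 - v $ 1 * (v $ 3)^2"])
      (auto simp: Sgens_def algebra_simps intro: cpoly4_power cpoly4.coord)
qed (auto intro: ideal_gen_zeroI)

lemma mul_z_congruent:
  "(\<lambda>v. v $ 3 * eval_monomial m v - eval_monomial (mul_z m) v) \<in> ideal_gen Sgens"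
proof (cases m)
  case (XYZ i j k)
  show ?thesis
  proof (cases "k < 2")
    case False
    then obtain k' where k: "k = k' + 2" by (metis add.commute le_Suc_ex not_less)
    show ?thesis
      by (intro ideal_gen_multiple[of "\<lambda>v. - ((v $ 1) ^ i * (v $ 2) ^ j * (v $ 3) ^ k')"
            "\<lambda>v. (v $ 2)^4 - (v $ 3)^3"])
        (auto simp: XYZ k Sgens_def algebra_simps power_add eval_nat_numeral
          intro!: cpoly4_minus cpoly4.mult cpoly4_power cpoly4.coord)
  qed (auto simp: XYZ intro: ideal_gen_zeroI)
next
  case (XW i)
  then show ?thesis
    by (intro ideal_gen_multiple[of "\<lambda>v. (v $ 1) ^ i" "\<lambda>v. v $ 3 * v $ 4 - v $ 1 * (v $ 2)^3"])
      (auto simp: Sgens_def algebra_simps intro: cpoly4_power cpoly4.coord)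
qed

lemma mul_w_congruent:
  "(\<lambda>v. v $ 4 * eval_monomial m v - eval_monomial (mul_w m) v) \<in> ideal_gen Sgens"
proof (cases m rule: mul_w.cases)
  case (1 i j k)
  then show ?thesis
    by (intro ideal_gen_multiple[of "\<lambda>v. (v $ 1) ^ i * (v $ 2) ^ j * (v $ 3) ^ k"
          "\<lambda>v. v $ 3 * v $ 4 - v $ 1 * (v $ 2)^3"])
      (auto simp: Sgens_def algebra_simps power_add intro!: cpoly4.mult cpoly4_power cpoly4.coord)
next
  case (2 i j)
  then show ?thesis
    by (intro ideal_gen_multiple[of "\<lambda>v. (v $ 1) ^ i * (v $ 2) ^ j"
          "\<lambda>v. v $ 2 * v $ 4 - v $ 1 * (v $ 3)^2"])
      (auto simp: Sgens_def algebra_simps intro!: cpoly4.mult cpoly4_power cpoly4.coord)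
next
  case (3 i)
  then show ?thesis by (auto intro: ideal_gen_zeroI)
next
  case (4 i)
  then show ?thesis
    by (intro ideal_gen_multiple[of "\<lambda>v. - ((v $ 1) ^ i)"
          "\<lambda>v. (v $ 1)^2 * (v $ 2)^2 * v $ 3 - (v $ 4)^2"])
      (auto simp: Sgens_def algebra_simps power_add eval_nat_numeral
        intro!: cpoly4_minus cpoly4_power cpoly4.coord)
qed

lemma standard_monomial_times_coord:
  assumes "standard_monomial m"
  shows "\<exists>m'. standard_monomial m' \<and>
    (\<lambda>v. v $ r * eval_monomial m v - eval_monomial m' v) \<in> ideal_gen Sgens"
proof -
  have "standard_monomial (mul_x m)" "standard_monomial (mul_y m)"
    "standard_monomial (mul_z m)" "standard_monomial (mul_w m)"
    using assms by (cases m rule: mul_w.cases; simp)+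
  then show ?thesis
    using exhaust_4[of r] mul_x_congruent mul_y_congruent mul_z_congruent mul_w_congruent by blast
qed

inductive_set standard_combinations :: "(complex^4 \<Rightarrow> complex) set" where
  zero: "(\<lambda>v. 0) \<in> standard_combinations"
| step: "f \<in> standard_combinations \<Longrightarrow> standard_monomial m \<Longrightarrow>
    (\<lambda>v. f v + c * eval_monomial m v) \<in> standard_combinations"

lemma standard_combinations_add:
  "g \<in> standard_combinations \<Longrightarrow> f \<in> standard_combinations \<Longrightarrow>
    (\<lambda>v. f v + g v) \<in> standard_combinations"
proof (induction g rule: standard_combinations.induct)
  case (step g m c)
  then have "(\<lambda>v. (f v + g v) + c * eval_monomial m v) \<in> standard_combinations"
    by (intro standard_combinations.step) auto
  then show ?case by (simp add: add.assoc)
qed simp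

lemma standard_combinations_scale:
  "f \<in> standard_combinations \<Longrightarrow> (\<lambda>v. d * f v) \<in> standard_combinations"
proof (induction f rule: standard_combinations.induct)
  case zero
  then show ?case using standard_combinations.zero by simp
next
  case (step f m c)
  then have "(\<lambda>v. d * f v + (d * c) * eval_monomial m v) \<in> standard_combinations"
    by (intro standard_combinations.step) auto
  then show ?case by (simp add: distrib_left mult.assoc)
qed

lemma standard_combinations_times_coord:
  "f \<in> standard_combinations \<Longrightarrow>
    \<exists>g\<in>standard_combinations. (\<lambda>v. v $ r * f v - g v) \<in> ideal_gen Sgens"
proof (induction f rule: standard_combinations.induct)
  case zero
  show ?case by (rule bexI[OF _ standard_combinations.zero]) (simp add: ideal_gen_zeroI)
next
  case (step f m c)
  obtain g where g: "g \<in> standard_combinations" "(\<lambda>v. v $ r * f v - g v) \<in> ideal_gen Sgens"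
    using step.IH by blast
  obtain m' where m': "standard_monomial m'"
    "(\<lambda>v. v $ r * eval_monomial m v - eval_monomial m' v) \<in> ideal_gen Sgens"
    using standard_monomial_times_coord[OF step.hyps(2)] by blast
  have "(\<lambda>v. (v $ r * f v - g v) + c * (v $ r * eval_monomial m v - eval_monomial m' v))
      \<in> ideal_gen Sgens"
    by (intro ideal_gen_add ideal_gen_mult[OF cpoly4.const] g(2) m'(2))
  then have "(\<lambda>v. v $ r * (f v + c * eval_monomial m v) - (g v + c * eval_monomial m' v))
      \<in> ideal_gen Sgens"
    by (rule ideal_gen_cong) (simp add: algebra_simps)
  moreover have "(\<lambda>v. g v + c * eval_monomial m' v) \<in> standard_combinations"
    by (rule standard_combinations.step[OF g(1) m'(1)])
  ultimately show ?case by (intro bexI[of _ "\<lambda>v. g v + c * eval_monomial m' v"])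
qed

definition has_standard_form :: "(complex^4 \<Rightarrow> complex) \<Rightarrow> bool" where
  "has_standard_form f \<longleftrightarrow> (\<exists>g\<in>standard_combinations. (\<lambda>v. f v - g v) \<in> ideal_gen Sgens)"

lemma has_standard_form_add:
  assumes "has_standard_form f" and "has_standard_form g"
  shows "has_standard_form (\<lambda>v. f v + g v)"
proof -
  obtain f' g' where f': "f' \<in> standard_combinations" "(\<lambda>v. f v - f' v) \<in> ideal_gen Sgens"
    and g': "g' \<in> standard_combinations" "(\<lambda>v. g v - g' v) \<in> ideal_gen Sgens"
    using assms unfolding has_standard_form_def by blast
  have "(\<lambda>v. (f v - f' v) + (g v - g' v)) \<in> ideal_gen Sgens"
    by (rule ideal_gen_add[OF f'(2) g'(2)])
  then have "(\<lambda>v. (f v + g v) - (f' v + g' v)) \<in> ideal_gen Sgens"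
    by (rule ideal_gen_cong) simp
  moreover have "(\<lambda>v. f' v + g' v) \<in> standard_combinations"
    by (rule standard_combinations_add[OF g'(1) f'(1)])
  ultimately show ?thesis
    unfolding has_standard_form_def by (intro bexI[of _ "\<lambda>v. f' v + g' v"])
qed

lemma has_standard_form_scale:
  assumes "has_standard_form f"
  shows "has_standard_form (\<lambda>v. d * f v)"
proof -
  obtain f' where f': "f' \<in> standard_combinations" "(\<lambda>v. f v - f' v) \<in> ideal_gen Sgens"
    using assms unfolding has_standard_form_def by blast
  have "(\<lambda>v. d * (f v - f' v)) \<in> ideal_gen Sgens"
    by (rule ideal_gen_mult[OF cpoly4.const f'(2)])
  then have "(\<lambda>v. d * f v - d * f' v) \<in> ideal_gen Sgens"
    by (rule ideal_gen_cong) (simp add: algebra_simps)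
  moreover have "(\<lambda>v. d * f' v) \<in> standard_combinations"
    by (rule standard_combinations_scale[OF f'(1)])
  ultimately show ?thesis
    unfolding has_standard_form_def by (intro bexI[of _ "\<lambda>v. d * f' v"])
qed

lemma has_standard_form_times_coord:
  assumes "has_standard_form f"
  shows "has_standard_form (\<lambda>v. v $ r * f v)"
proof -
  obtain f' where f': "f' \<in> standard_combinations" "(\<lambda>v. f v - f' v) \<in> ideal_gen Sgens"
    using assms unfolding has_standard_form_def by blast
  obtain g where g: "g \<in> standard_combinations" "(\<lambda>v. v $ r * f' v - g v) \<in> ideal_gen Sgens"
    using standard_combinations_times_coord[OF f'(1)] by blast
  have "(\<lambda>v. v $ r * (f v - f' v) + (v $ r * f' v - g v)) \<in> ideal_gen Sgens"
    by (intro ideal_gen_add ideal_gen_mult[OF cpoly4.coord] f'(2) g(2))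
  then have "(\<lambda>v. v $ r * f v - g v) \<in> ideal_gen Sgens"
    by (rule ideal_gen_cong) (simp add: algebra_simps)
  with g(1) show ?thesis unfolding has_standard_form_def by blast
qed

lemma has_standard_form_one: "has_standard_form (\<lambda>v. 1)"
proof -
  have "(\<lambda>v. 0 + 1 * eval_monomial (XYZ 0 0 0) v) \<in> standard_combinations"
    by (intro standard_combinations.step standard_combinations.zero) simp
  then show ?thesis unfolding has_standard_form_def
    by (intro bexI[of _ "\<lambda>v. 0 + 1 * eval_monomial (XYZ 0 0 0) v"] ideal_gen_zeroI) simp_all
qed

lemma has_standard_form_cpoly4: "cpoly4 p \<Longrightarrow> has_standard_form p"
proof -
  have "has_standard_form (\<lambda>v. p v * g v)" if "cpoly4 p" "has_standard_form g" for p g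
    using that
  proof (induction p arbitrary: g rule: cpoly4.induct)
    case (add f h)
    then show ?case using has_standard_form_add[of "\<lambda>v. f v * g v" "\<lambda>v. h v * g v"]
      by (simp add: distrib_right)
  next
    case (mult f h)
    then show ?case by (simp add: mult.assoc)
  qed (simp_all add: has_standard_form_scale has_standard_form_times_coord)
  then show "cpoly4 p \<Longrightarrow> has_standard_form p"
    using has_standard_form_one by fastforce
qed

lemma standard_combinations_sum:
  assumes "f \<in> standard_combinations"
  shows "\<exists>(n::nat) c \<mu>. (\<forall>l<n. standard_monomial (\<mu> l)) \<and>
    f = (\<lambda>v. \<Sum>l<n. c l * eval_monomial (\<mu> l) v)"
  using assms
proof (induction f rule: standard_combinations.induct)
  case zero
  show ?case by (intro exI[of _ "0::nat"]) simp
next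
  case (step f m c0)
  then obtain n :: nat and c \<mu> where "\<forall>l<n. standard_monomial (\<mu> l)"
    and "f = (\<lambda>v. \<Sum>l<n. c l * eval_monomial (\<mu> l) v)"
    by blast
  with step.hyps(2) show ?case
    by (intro exI[of _ "Suc n"] exI[of _ "c(n := c0)"] exI[of _ "\<mu>(n := m)"])
      (auto simp: less_Suc_eq intro!: sum.cong)
qed

lemma standard_combination_eq_0_if_vanishes_on_surfS:
  assumes f: "f \<in> standard_combinations" and van: "\<forall>v\<in>surfS. f v = 0"
  shows "f v = 0"
proof -
  obtain n :: nat and c \<mu> where \<mu>: "\<forall>l<n. standard_monomial (\<mu> l)"
    and f_eq: "f = (\<lambda>v. \<Sum>l<n. c l * eval_monomial (\<mu> l) v)"
    using standard_combinations_sum[OF f] by blast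
  have coeff: "(\<Sum>l\<in>{l\<in>{..<n}. \<mu> l = m}. c l) = 0" if "standard_monomial m" for m
  proof -
    have "(\<Sum>l\<in>{..<n}. c l * (a ^ fst (rho_exponents (\<mu> l)) * t ^ snd (rho_exponents (\<mu> l)))) = 0"
      for a t
    proof -
      have "rho a t \<in> surfS" by (auto simp: mem_surfS)
      with van have "f (rho a t) = 0" by blast
      then show ?thesis using f_eq by (simp add: eval_monomial_rho)
    qed
    then have "(\<Sum>l\<in>{l\<in>{..<n}. rho_exponents (\<mu> l) = rho_exponents m}. c l) = 0"
      by (intro polyfun2_coeff_sum_eq_0) auto
    moreover have "{l\<in>{..<n}. rho_exponents (\<mu> l) = rho_exponents m} = {l\<in>{..<n}. \<mu> l = m}"
      using \<mu> that inj_on_rho_exponents by (auto dest: inj_onD)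
    ultimately show ?thesis by simp
  qed
  have "f v = (\<Sum>m\<in>\<mu> ` {..<n}. \<Sum>l\<in>{l\<in>{..<n}. \<mu> l = m}. c l * eval_monomial (\<mu> l) v)"
    unfolding f_eq by (rule sum.image_gen) simp
  also have "\<dots> = (\<Sum>m\<in>\<mu> ` {..<n}. (\<Sum>l\<in>{l\<in>{..<n}. \<mu> l = m}. c l) * eval_monomial m v)"
    by (simp add: sum_distrib_right)
  also have "\<dots> = 0"
    using \<mu> coeff by (auto intro!: sum.neutral)
  finally show ?thesis .
qed

lemma ideal_of_surfS: "{f. cpoly4 f \<and> (\<forall>v\<in>surfS. f v = 0)} = ideal_gen Sgens"
proof (intro equalityI subsetI; clarsimp)
  fix f assume "f \<in> ideal_gen Sgens"
  moreover have "\<forall>g\<in>set Sgens. cpoly4 g"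
    by (auto simp: Sgens_def intro!: cpoly4_diff cpoly4.mult cpoly4_power cpoly4.coord)
  ultimately show "cpoly4 f \<and> (\<forall>v\<in>surfS. f v = 0)"
    using cpoly4_ideal_gen ideal_gen_vanish Sgens_vanish_surfS by blast
next
  fix f assume "cpoly4 f" and van: "\<forall>v\<in>surfS. f v = 0"
  then obtain g where g: "g \<in> standard_combinations" "(\<lambda>v. f v - g v) \<in> ideal_gen Sgens"
    using has_standard_form_cpoly4 unfolding has_standard_form_def by blast
  have "\<forall>v\<in>surfS. g v = 0"
    using van ideal_gen_vanish[OF g(2)] Sgens_vanish_surfS by force
  then have g0: "g v = 0" for v by (rule standard_combination_eq_0_if_vanishes_on_surfS[OF g(1)])
  from g(2) show "f \<in> ideal_gen Sgens" by (rule ideal_gen_cong) (simp add: g0)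
qed

section \<open>The hyperplane section x = 0\<close>

lemma Jgens_vanish_to_second_order_on_w_axis:
  "g \<in> set Jgens \<Longrightarrow> g (axis 4 0) = 0 \<and> ((\<lambda>s. g (axis 4 s)) has_field_derivative 0) (at 0)"
  by (auto simp: Jgens_def Sgens_def intro!: derivative_eq_intros)

lemma w_notin_localized_Jideal: "\<not> loc_mem0 Jgens (\<lambda>v. v $ 4)"
proof
  assume "loc_mem0 Jgens (\<lambda>v. v $ 4)"
  then obtain u where u: "cpoly4 u" "u 0 \<noteq> 0" "(\<lambda>v. u v * v $ 4) \<in> ideal_gen Jgens"
    unfolding loc_mem0_def by blast
  have axis: "(\<lambda>s. axis 4 s $ i) field_differentiable (at 0)" for i :: 4
    by (cases "i = 4") (simp_all add: axis_def)
  obtain U where U: "((\<lambda>s. u (axis 4 s)) has_field_derivative U) (at 0)"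
    using field_differentiable_cpoly4_comp[OF u(1) axis] unfolding field_differentiable_def by blast
  have "axis 4 0 = (0::complex^4)" by simp
  with DERIV_mult[OF U DERIV_ident]
  have "((\<lambda>s. u (axis 4 s) * s) has_field_derivative u 0) (at 0)" by simp
  moreover have "((\<lambda>s. u (axis 4 s) * s) has_field_derivative 0) (at 0)"
    using ideal_gen_has_field_derivative_0[OF u(3) axis Jgens_vanish_to_second_order_on_w_axis]
    by simp
  ultimately have "u 0 = 0" by (rule DERIV_unique)
  with u(2) show False ..
qed

lemma coord_times_w_in_Jideal: "(\<lambda>v. v $ i * v $ 4) \<in> ideal_gen Jgens"
proof -
  consider "i = 1" | "i = 2" | "i = 3" | "i = 4" using exhaust_4 by blast
  then show ?thesis
  proof cases
    case 1
    then show ?thesis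
      by (intro ideal_gen_multiple[of "\<lambda>v. v $ 4" "\<lambda>v. v $ 1"]) (auto simp: Jgens_def cpoly4.coord)
  next
    case 2
    then show ?thesis
      by (intro ideal_gen_lincomb2[of "\<lambda>v. 1" "\<lambda>v. (v $ 3)^2"
            "\<lambda>v. v $ 2 * v $ 4 - v $ 1 * (v $ 3)^2" _ "\<lambda>v. v $ 1"])
        (auto simp: Jgens_def Sgens_def intro: cpoly4.const cpoly4_power cpoly4.coord)
  next
    case 3
    then show ?thesis
      by (intro ideal_gen_lincomb2[of "\<lambda>v. 1" "\<lambda>v. (v $ 2)^3"
            "\<lambda>v. v $ 3 * v $ 4 - v $ 1 * (v $ 2)^3" _ "\<lambda>v. v $ 1"])
        (auto simp: Jgens_def Sgens_def intro: cpoly4.const cpoly4_power cpoly4.coord)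
  next
    case 4
    have "cpoly4 (\<lambda>v. v $ 1 * (v $ 2)^2 * v $ 3)"
      by (intro cpoly4.mult cpoly4_power cpoly4.coord)
    then show ?thesis
      using 4 cpoly4.const[of "-1"]
      by (intro ideal_gen_lincomb2[of "\<lambda>v. -1" "\<lambda>v. v $ 1 * (v $ 2)^2 * v $ 3"
            "\<lambda>v. (v $ 1)^2 * (v $ 2)^2 * v $ 3 - (v $ 4)^2" _ "\<lambda>v. v $ 1"])
        (simp_all add: Jgens_def Sgens_def algebra_simps power2_eq_square)
  qed
qed

lemma hyperplane_section_embedded_point:
  "\<exists>g. cpoly4 g \<and> \<not> loc_mem0 Jgens g \<and> (\<forall>i. loc_mem0 Jgens (\<lambda>v. v $ i * g v))"
proof (intro exI conjI allI)
  show "cpoly4 (\<lambda>v. v $ 4)" by (rule cpoly4.coord)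
  show "\<not> loc_mem0 Jgens (\<lambda>v. v $ 4)" by (rule w_notin_localized_Jideal)
  show "loc_mem0 Jgens (\<lambda>v. v $ i * v $ 4)" for i
    unfolding loc_mem0_def using coord_times_w_in_Jideal
    by (intro exI[of _ "\<lambda>v. 1"]) (simp add: cpoly4.const)
qed

theorem mainTheorem9:
  shows "sing_locus surfS = singline
     \<and> whitney_regular_at0 surfS singline singline
     \<and> {f. cpoly4 f \<and> (\<forall>v\<in>surfS. f v = 0)} = ideal_gen Sgens
     \<and> surfS = {v. \<forall>g\<in>set Sgens. g v = 0}
     \<and> (\<exists>g. cpoly4 g \<and> \<not> loc_mem0 Jgens g \<and> (\<forall>i. loc_mem0 Jgens (\<lambda>v. v$i * g v)))
     \<and> (0::complex^4) islimpt (surfS \<inter> {v. v$1 = 0})"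
  by (intro conjI sing_locus_surfS whitney_regular_surfS ideal_of_surfS surfS_eq_zero_set
      hyperplane_section_embedded_point zero_islimpt_surfS_hyperplane)

end
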